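(* Let $D$ be a positive squarefree integer with $N(\varepsilon)=-1$, and let $Z_D(s)=\sum_{n\ge1}F_D(n)^{-s}$ for $\operatorname{Re}s>0$. Then $Z_D$ has meromorphic continuation to $\mathbb{C}$ given by \[ Z_D(s)=q^{s/2}\sum_{k\ge0}\binom{-s}{k}\frac{1}{\varepsilon^{s+2k}+(-1)^{k+1}}, \] and its only poles are simple poles located at $s=-2k+\frac{(2n+k)\pi i}{\log\varepsilon}$ with $k,n\in\mathbb{Z}$, $k\ge0$.
   Context: $D$ positive squarefree, $\mathcal{O}_D$ the ring of integers of $\mathbb{Q}(\sqrt D)\subset\mathbb{R}$, $\varepsilon>1$ its fundamental unit, $\overline{\varepsilon}$ its conjugate, $N$ the norm. $q=D$ if $D\equiv1\bmod4$, else $q=4D$. $F_D(n)=(\varepsilon^n-\overline{\varepsilon}^{\,n})/\sqrt q$. $\binom{-s}{k}=\frac{(-s)(-s-1)\cdots(-s-k+1)}{k!}$. *)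

theory Defs
  imports "HOL-Complex_Analysis.Complex_Analysis" "HOL-Computational_Algebra.Squarefree"
begin

definition ring_of_integers :: "int \<Rightarrow> real set" where
  "ring_of_integers D = {x. \<exists>a b::int. x = (of_int a + of_int b * sqrt (of_int D)) / 2 \<and>
      (if D mod 4 = 1 then even (a - b) else even a \<and> even b)}"

definition units_OD :: "int \<Rightarrow> real set" where
  "units_OD D = {u \<in> ring_of_integers D. \<exists>v \<in> ring_of_integers D. u * v = 1}"

definition is_fundamental_unit :: "int \<Rightarrow> real \<Rightarrow> bool" where
  "is_fundamental_unit D e \<longleftrightarrow> e \<in> units_OD D \<and> e > 1 \<and>
      (\<forall>u \<in> units_OD D. u > 1 \<longrightarrow> e \<le> u)"

definition qconj :: "int \<Rightarrow> real \<Rightarrow> real" where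
  "qconj D x = (THE y. \<exists>a b::rat. x = of_rat a + of_rat b * sqrt (of_int D) \<and>
                                  y = of_rat a - of_rat b * sqrt (of_int D))"

definition qnorm :: "int \<Rightarrow> real \<Rightarrow> real" where
  "qnorm D x = x * qconj D x"

definition qdisc :: "int \<Rightarrow> int" where
  "qdisc D = (if D mod 4 = 1 then D else 4 * D)"

definition F_D :: "int \<Rightarrow> real \<Rightarrow> nat \<Rightarrow> real" where
  "F_D D e n = (e ^ n - qconj D e ^ n) / sqrt (of_int (qdisc D))"

end

theory Submission
  imports Defs
begin

(*
  Since N(e) = -1, the conjugate of the fundamental unit e is -1/e, so
  F(m) = e^m (1 + delta m) / sqrt q with delta m = -(-e^-2)^m.  Expanding (1 + delta m)^-s by the
  binomial series and summing over m first (a geometric series, absolutely convergent for Re s > 0)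
  gives Z(s) = q^(s/2) sum_k binom(-s, k) / (e^(s+2k) - (-1)^k).  Up to a factor depending only
  on |s|, the k-th term is bounded by binom(|s|+k-1, k) e^(-2k), so the series is meromorphic on C; its
  singularities are the zeros of the denominators, which are simple and lie on Re s = -2k, where the
  numerator binom(-s, k) does not vanish.
*)

lemma summable_pochhammer_geometric:
  fixes r x :: real
  assumes "0 \<le> r" "0 \<le> x" "x < 1"
  shows "summable (\<lambda>k. pochhammer r k / fact k * x ^ k)"
proof -
  have "(\<lambda>k. ((- r) gchoose k) * (- x) ^ k) sums (1 + - x) powr (- r)"
    by (rule gen_binomial_real) (use assms in auto)
  moreover have "((- r) gchoose k) * (- x) ^ k = pochhammer r k / fact k * x ^ k" for k
  proof -
    have "((- r) gchoose k) * (- x) ^ k = ((-1) ^ k * (-1) ^ k) * (pochhammer r k / fact k * x ^ k)"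
      by (simp add: gbinomial_pochhammer power_minus[of x])
    then show ?thesis
      by (simp flip: power_mult_distrib)
  qed
  ultimately show ?thesis
    by (simp add: sums_iff)
qed

lemma pochhammer_nonneg':
  fixes x :: "'a :: linordered_semidom"
  shows "0 \<le> x \<Longrightarrow> 0 \<le> pochhammer x n"
  by (simp add: pochhammer_prod prod_nonneg)

lemma norm_pochhammer_le:
  fixes s :: "'a :: real_normed_field"
  shows "norm (pochhammer s k) \<le> pochhammer (norm s) k"
proof (induction k)
  case (Suc k)
  have "norm (pochhammer s (Suc k)) = norm (pochhammer s k) * norm (s + of_nat k)"
    by (simp add: pochhammer_Suc norm_mult)
  also have "\<dots> \<le> pochhammer (norm s) k * (norm s + of_nat k)"
    by (intro mult_mono Suc norm_triangle_le) (auto simp: pochhammer_nonneg')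
  finally show ?case
    by (simp add: pochhammer_Suc)
qed simp

lemma norm_gbinomial_uminus_le:
  fixes s :: "'a :: real_normed_field"
  shows "norm ((- s) gchoose k) \<le> pochhammer (norm s) k / fact k"
proof -
  have "norm ((- s) gchoose k) = norm (pochhammer s k) / fact k"
    by (simp add: gbinomial_pochhammer norm_mult norm_divide norm_power)
  also have "\<dots> \<le> pochhammer (norm s) k / fact k"
    by (intro divide_right_mono norm_pochhammer_le) auto
  finally show ?thesis .
qed

lemma pochhammer_mono:
  fixes a b :: "'a :: linordered_semidom"
  shows "0 \<le> a \<Longrightarrow> a \<le> b \<Longrightarrow> pochhammer a k \<le> pochhammer b k"
  unfolding pochhammer_prod by (intro prod_mono) auto

lemma sums_swap_dominated:
  fixes a :: "nat \<Rightarrow> nat \<Rightarrow> 'a :: banach" and B M :: "nat \<Rightarrow> real"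
  assumes rows: "\<And>n. (\<lambda>k. a n k) sums r n"
    and cols: "\<And>k. (\<lambda>n. a n k) sums c k"
    and bound: "\<And>n k. norm (a n k) \<le> B n * M k"
    and "summable B" "summable M" "\<And>n. 0 \<le> B n" "\<And>k. 0 \<le> M k"
  shows "r sums suminf c"
proof -
  have row_norm: "summable (\<lambda>k. norm (a n k))" for n
    by (rule summable_comparison_test'[OF summable_mult[OF \<open>summable M\<close>, of "B n"]])
      (simp add: bound)
  have col_norm: "summable (\<lambda>n. norm (a n k))" for k
    by (rule summable_comparison_test'[OF summable_mult2[OF \<open>summable B\<close>, of "M k"]])
      (simp add: bound)
  have row_majorant: "((\<lambda>k. B n * M k) has_sum B n * suminf M) UNIV" for n
    using assms by (intro sums_nonneg_imp_has_sum sums_mult summable_sums) auto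
  have "0 \<le> B n * suminf M" for n
    using assms by (simp add: suminf_nonneg)
  then have "(\<lambda>n. B n * suminf M) summable_on UNIV"
    using assms by (subst summable_on_UNIV_nonneg_real_iff) (auto intro: summable_mult2)
  then have "(\<lambda>(n, k). B n * M k) summable_on UNIV \<times> UNIV"
    using row_majorant assms by (intro summable_on_SigmaI[where g = "\<lambda>n. B n * suminf M"]) auto
  then have "(\<lambda>x. norm ((\<lambda>(n, k). a n k) x)) summable_on UNIV \<times> UNIV"
    by (rule Infinite_Sum.abs_summable_on_comparison_test') (auto simp: bound)
  then have "(\<lambda>(n, k). a n k) summable_on UNIV \<times> UNIV"
    by (rule abs_summable_summable)
  then obtain S where S: "((\<lambda>(n, k). a n k) has_sum S) (UNIV \<times> UNIV)"
    by (auto simp: summable_on_def)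
  have "(r has_sum S) UNIV"
    by (rule has_sum_SigmaD[OF S]) (simp add: norm_summable_imp_has_sum[OF row_norm rows])
  moreover have "(c has_sum S) UNIV"
    by (rule has_sum_SigmaD[OF has_sum_swap[THEN iffD1, OF S]])
      (simp add: norm_summable_imp_has_sum[OF col_norm cols])
  ultimately show ?thesis
    by (metis has_sum_imp_sums sums_unique)
qed

lemma eventually_nonzero_at_simple_zero:
  fixes g :: "'a :: real_normed_field \<Rightarrow> 'a"
  assumes "g z = 0" "(g has_field_derivative g') (at z)" "g' \<noteq> 0"
  shows "eventually (\<lambda>w. g w \<noteq> 0) (at z)"
proof -
  have "((\<lambda>w. (g w - g z) / (w - z)) \<longlongrightarrow> g') (at z)"
    using assms(2) by (simp add: has_field_derivative_iff)
  then have "eventually (\<lambda>w. (g w - g z) / (w - z) \<noteq> 0) (at z)"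
    using assms(3) by (rule tendsto_imp_eventually_ne)
  moreover have "eventually (\<lambda>w. w \<noteq> z) (at z)"
    by (rule eventually_neq_at_within)
  ultimately show ?thesis
    by eventually_elim (use assms(1) in auto)
qed

lemma simple_pole_quotient_plus_analytic:
  fixes f g h :: "complex \<Rightarrow> complex"
  assumes "f analytic_on {z}" "g analytic_on {z}" "h analytic_on {z}"
    and "g z = 0" "deriv g z \<noteq> 0" "f z \<noteq> 0"
  shows "is_pole (\<lambda>w. f w / g w + h w) z \<and> zorder (\<lambda>w. f w / g w + h w) z = -1"
proof -
  define F where "F w = f w + h w * g w" for w
  have F: "F analytic_on {z}" "F z \<noteq> 0"
    unfolding F_def using assms by (auto intro!: analytic_intros)
  have "(g has_field_derivative deriv g z) (at z)"
    using assms(2) by (simp add: analytic_on_imp_differentiable_at DERIV_deriv_iff_field_differentiable)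
  then have g_ev: "eventually (\<lambda>w. g w \<noteq> 0) (at z)"
    using assms(4,5) by (intro eventually_nonzero_at_simple_zero)
  have F_ev: "eventually (\<lambda>w. F w \<noteq> 0) (at z)"
    using analytic_at_imp_isCont[OF F(1)] F(2) by (intro tendsto_imp_eventually_ne) (auto simp: isCont_def)
  have eq: "eventually (\<lambda>w. F w / g w = f w / g w + h w) (at z)"
    using g_ev by eventually_elim (simp add: F_def field_simps)
  have "zorder g z = 1"
    using assms(2,4,5) by (intro zorder_zero_eqI') auto
  moreover have "zorder F z = 0"
    using F by (rule zorder_eq_0I)
  moreover have "zorder (\<lambda>w. F w / g w) z = zorder F z - zorder g z"
    using F(1) assms(2) F_ev g_ev
    by (intro zorder_divide analytic_on_imp_meromorphic_on eventually_frequently) auto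
  ultimately have order: "zorder (\<lambda>w. F w / g w) z = -1"
    by simp
  have "is_pole (\<lambda>w. F w / g w) z"
    using F(1) assms(2) F_ev g_ev order
    by (intro zorder_neg_imp_is_pole meromorphic_intros analytic_on_imp_meromorphic_on)
      (auto elim: eventually_mono[OF eventually_conj])
  with order show ?thesis
    using is_pole_cong[OF eq refl] zorder_cong[OF eq refl] by simp
qed

lemma holomorphic_on_suminf_local_majorant:
  fixes f :: "nat \<Rightarrow> complex \<Rightarrow> complex"
  assumes "open S" "\<And>n. f n holomorphic_on S"
    and "\<And>x. x \<in> S \<Longrightarrow> \<exists>d h. 0 < d \<and> summable h \<and>
                 (\<forall>\<^sub>F n in sequentially. \<forall>y\<in>ball x d \<inter> S. norm (f n y) \<le> h n)"
  shows "(\<lambda>s. \<Sum>n. f n s) holomorphic_on S"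
proof -
  have "\<And>n x. x \<in> S \<Longrightarrow> (f n has_field_derivative deriv (f n) x) (at x)"
    using assms(1,2) by (intro holomorphic_derivI) auto
  from series_and_derivative_comparison_local[OF assms(1) this assms(3)]
  obtain g g' where g: "\<And>x. x \<in> S \<Longrightarrow> (\<lambda>n. f n x) sums g x \<and> (g has_field_derivative g' x) (at x)"
    by blast
  have "((\<lambda>s. \<Sum>n. f n s) has_field_derivative g' x) (at x)" if "x \<in> S" for x
  proof (rule has_field_derivative_transform_within_open[OF _ assms(1) that])
    show "(g has_field_derivative g' x) (at x)"
      using g[OF that] by blast
    show "g y = (\<Sum>n. f n y)" if "y \<in> S" for y
      using g[OF that] by (simp add: sums_iff)
  qed
  then show ?thesis
    using assms(1) holomorphic_on_open by blast
qed

lemma powr_of_real_pos: "0 < x \<Longrightarrow> complex_of_real x powr w = exp (w * of_real (ln x))"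
  by (simp add: powr_def Ln_of_real)

locale fibonacci_zeta =
  fixes q e :: real
  assumes q_pos: "0 < q" and e_gt_1: "1 < e"
begin

definition L :: real where "L = ln e"

lemma L_pos: "0 < L"
  using e_gt_1 by (simp add: L_def)

lemma powr_e: "complex_of_real e powr w = exp (w * of_real L)"
  using powr_of_real_pos[of e w] e_gt_1 by (simp add: L_def)

definition den :: "nat \<Rightarrow> complex \<Rightarrow> complex" where
  "den k s = complex_of_real e powr (s + 2 * of_nat k) + (-1) ^ (k + 1)"

definition binom_term :: "nat \<Rightarrow> complex \<Rightarrow> complex" where
  "binom_term k s = ((- s) gchoose k) / den k s"

definition Z :: "complex \<Rightarrow> complex" where
  "Z s = complex_of_real q powr (s / 2) * (\<Sum>k. binom_term k s)"

definition tail :: "nat \<Rightarrow> complex \<Rightarrow> complex" where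
  "tail K s = (\<Sum>k. binom_term (k + K) s)"

definition poles :: "complex set" where
  "poles = {s. \<exists>k::nat. \<exists>n::int. s = - 2 * of_nat k + of_int (2 * n + int k) * pi * \<i> / of_real L}"

lemma den_eq: "den k s = exp ((s + 2 * of_nat k) * of_real L) - (-1) ^ k"
  by (simp add: den_def powr_e)

lemma norm_den_ge: "exp ((Re s + 2 * real k) * L) - 1 \<le> norm (den k s)"
  using norm_triangle_ineq2[of "exp ((s + 2 * of_nat k) * of_real L)" "(-1) ^ k"]
  by (simp add: den_eq norm_power)

lemma inverse_norm_den_le:
  assumes "1 \<le> Re s + 2 * real k"
  shows "1 / norm (den k s) \<le> e / (e - 1) * exp (- (Re s + 2 * real k) * L)"
proof -
  define y where "y = exp ((Re s + 2 * real k) * L)"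
  have "1 * L \<le> (Re s + 2 * real k) * L"
    using assms L_pos by (intro mult_right_mono) auto
  then have "exp L \<le> y"
    by (simp add: y_def)
  then have "e \<le> y"
    using e_gt_1 by (simp add: L_def)
  then have "y * ((e - 1) / e) \<le> y - 1"
    using e_gt_1 by (simp add: field_simps)
  also have "y - 1 \<le> norm (den k s)"
    using norm_den_ge[of s k] by (simp add: y_def)
  finally have "1 / norm (den k s) \<le> 1 / (y * ((e - 1) / e))"
    using e_gt_1 le_imp_inverse_le[of "y * ((e - 1) / e)"] by (simp add: y_def inverse_eq_divide)
  also have "\<dots> = e / (e - 1) * (1 / y)"
    using e_gt_1 by (simp add: y_def)
  also have "1 / y = exp (- (Re s + 2 * real k) * L)"
    by (simp only: y_def mult_minus_left exp_minus inverse_eq_divide)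
  finally show ?thesis .
qed

lemma den_nonzero:
  assumes "0 < Re s + 2 * real k"
  shows "den k s \<noteq> 0"
proof -
  have "1 < exp ((Re s + 2 * real k) * L)"
    using assms L_pos by simp
  then show ?thesis
    using norm_den_ge[of s k] by auto
qed

lemma den_holomorphic: "den k holomorphic_on A"
  unfolding den_eq[abs_def] by (intro holomorphic_intros)

lemma binom_term_holomorphic:
  assumes "\<And>s. s \<in> A \<Longrightarrow> den k s \<noteq> 0"
  shows "binom_term k holomorphic_on A"
  unfolding binom_term_def[abs_def] gbinomial_prod_rev
  using assms by (intro holomorphic_intros den_holomorphic) auto

definition majorant :: "real \<Rightarrow> nat \<Rightarrow> real" where
  "majorant R k = pochhammer R k / fact k * exp (-2 * L) ^ k"

lemma summable_majorant: "0 \<le> R \<Longrightarrow> summable (majorant R)"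
  unfolding majorant_def by (rule summable_pochhammer_geometric) (use L_pos in auto)

lemma majorant_nonneg: "0 \<le> R \<Longrightarrow> 0 \<le> majorant R k"
  by (simp add: majorant_def pochhammer_nonneg')

lemma norm_binom_term_le:
  assumes "norm s \<le> R" "R + 1 \<le> 2 * real k"
  shows "norm (binom_term k s) \<le> e / (e - 1) * exp (R * L) * majorant R k"
proof -
  have "- Re s \<le> R" "0 \<le> R"
    using assms(1) abs_Re_le_cmod[of s] norm_ge_zero[of s] by linarith+
  have "norm ((- s) gchoose k) \<le> pochhammer R k / fact k"
    using norm_gbinomial_uminus_le[of s k] pochhammer_mono[OF norm_ge_zero assms(1), of k]
    by (meson divide_right_mono fact_ge_zero order_trans)
  moreover have "1 / norm (den k s) \<le> e / (e - 1) * (exp (R * L) * exp (-2 * L) ^ k)"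
  proof -
    have "- Re s * L \<le> R * L"
      using \<open>- Re s \<le> R\<close> L_pos by (intro mult_right_mono) auto
    then have "exp (- (Re s + 2 * real k) * L) \<le> exp (R * L - 2 * real k * L)"
      by (simp add: algebra_simps)
    also have "\<dots> = exp (R * L) * exp (-2 * L) ^ k"
      by (simp add: exp_diff exp_of_nat_mult[symmetric] exp_minus field_simps)
    finally have exp_le: "exp (- (Re s + 2 * real k) * L) \<le> exp (R * L) * exp (-2 * L) ^ k" .
    have "1 / norm (den k s) \<le> e / (e - 1) * exp (- (Re s + 2 * real k) * L)"
      using \<open>- Re s \<le> R\<close> assms(2) by (intro inverse_norm_den_le) linarith
    also have "\<dots> \<le> e / (e - 1) * (exp (R * L) * exp (-2 * L) ^ k)"
      using exp_le e_gt_1 by (intro mult_left_mono) auto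
    finally show ?thesis .
  qed
  ultimately have "norm ((- s) gchoose k) * (1 / norm (den k s))
      \<le> pochhammer R k / fact k * (e / (e - 1) * (exp (R * L) * exp (-2 * L) ^ k))"
    by (rule mult_mono) (use \<open>0 \<le> R\<close> in \<open>auto simp: pochhammer_nonneg'\<close>)
  then show ?thesis
    by (simp add: binom_term_def majorant_def norm_divide field_simps)
qed

lemma summable_binom_term: "summable (\<lambda>k. binom_term k s)"
proof (rule summable_comparison_test')
  show "summable (\<lambda>k. e / (e - 1) * exp (norm s * L) * majorant (norm s) k)"
    by (intro summable_mult summable_majorant) auto
  show "norm (binom_term k s) \<le> e / (e - 1) * exp (norm s * L) * majorant (norm s) k"
    if "nat \<lceil>norm s + 1\<rceil> \<le> k" for k
    by (rule norm_binom_term_le) (use that in linarith)+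
qed

lemma tail_holomorphic: "tail K holomorphic_on {s. - 2 * real K < Re s}"
  unfolding tail_def[abs_def]
proof (rule holomorphic_on_suminf_local_majorant)
  show "open {s. - 2 * real K < Re s}"
    by (simp add: open_halfspace_Re_gt)
  show "binom_term (k + K) holomorphic_on {s. - 2 * real K < Re s}" for k
    by (rule binom_term_holomorphic, rule den_nonzero) auto
  fix x :: complex
  define R where "R = norm x + 1"
  have "\<forall>\<^sub>F k in sequentially. \<forall>y\<in>ball x 1 \<inter> {s. - 2 * real K < Re s}.
          norm (binom_term (k + K) y) \<le> e / (e - 1) * exp (R * L) * majorant R (k + K)"
  proof (rule eventually_sequentiallyI[of "nat \<lceil>R + 1\<rceil>"], safe)
    fix k y assume "nat \<lceil>R + 1\<rceil> \<le> k" "y \<in> ball x 1"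
    then show "norm (binom_term (k + K) y) \<le> e / (e - 1) * exp (R * L) * majorant R (k + K)"
      using norm_triangle_ineq2[of y x]
      by (intro norm_binom_term_le) (auto simp: R_def dist_norm norm_minus_commute)
  qed
  moreover have "summable (\<lambda>k. e / (e - 1) * exp (R * L) * majorant R (k + K))"
    using summable_majorant[of R] by (intro summable_mult) (auto simp: R_def)
  ultimately show "\<exists>d h. 0 < d \<and> summable h \<and>
      (\<forall>\<^sub>F k in sequentially. \<forall>y\<in>ball x d \<inter> {s. - 2 * real K < Re s}. norm (binom_term (k + K) y) \<le> h k)"
    by (intro exI[of _ 1] exI conjI) auto
qed

lemma sums_Z: "(\<lambda>k. complex_of_real q powr (s / 2) * binom_term k s) sums Z s"
  unfolding Z_def by (intro sums_mult summable_sums summable_binom_term)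

lemma Z_eq_partial_sum_plus_tail:
  "Z s = complex_of_real q powr (s / 2) * ((\<Sum>k<K. binom_term k s) + tail K s)"
  using suminf_split_initial_segment[OF summable_binom_term, of s K]
  by (simp add: Z_def tail_def)

lemma powr_q_analytic: "(\<lambda>s. complex_of_real q powr (s / 2)) analytic_on A"
  unfolding powr_of_real_pos[OF q_pos] by (intro analytic_intros) auto

lemma binom_term_analytic: "den k z \<noteq> 0 \<Longrightarrow> binom_term k analytic_on {z}"
  unfolding binom_term_def[abs_def] gbinomial_prod_rev
  using holomorphic_on_imp_analytic_at[OF den_holomorphic open_UNIV]
  by (intro analytic_intros) auto

lemma binom_term_meromorphic: "binom_term k meromorphic_on A"
  unfolding binom_term_def[abs_def] gbinomial_prod_rev
  using holomorphic_on_imp_analytic_at[OF den_holomorphic open_UNIV]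
  by (intro meromorphic_intros analytic_on_imp_meromorphic_on analytic_intros)
    (auto simp: analytic_on_def)

lemma tail_analytic: "- 2 * real K < Re z \<Longrightarrow> tail K analytic_on {z}"
  using tail_holomorphic open_halfspace_Re_gt[of "- 2 * real K"]
  by (metis analytic_at mem_Collect_eq)

lemma Re_gt_neg_two_ceiling_norm: "- 2 * real (nat \<lceil>norm z\<rceil> + 1) < Re z"
proof -
  define N where "N = real (nat \<lceil>norm z\<rceil>)"
  have "- Re z \<le> norm z"
    using abs_Re_le_cmod[of z] abs_ge_minus_self[of "Re z"] by linarith
  moreover have "norm z \<le> N" "0 \<le> N"
    unfolding N_def by (rule real_nat_ceiling_ge, rule of_nat_0_le_iff)
  ultimately show ?thesis
    by (simp flip: N_def)
qed

lemma tail_analytic_at_ceiling_norm: "tail (nat \<lceil>norm z\<rceil> + 1) analytic_on {z}"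
  by (rule tail_analytic[OF Re_gt_neg_two_ceiling_norm])

lemma Z_meromorphic: "Z meromorphic_on UNIV"
proof -
  have "Z meromorphic_on {z}" for z
  proof -
    define K where "K = nat \<lceil>norm z\<rceil> + 1"
    have "(\<lambda>s. complex_of_real q powr (s / 2) * ((\<Sum>k<K. binom_term k s) + tail K s)) meromorphic_on {z}"
      using tail_analytic_at_ceiling_norm[of z, folded K_def]
      by (intro meromorphic_intros binom_term_meromorphic analytic_on_imp_meromorphic_on powr_q_analytic)
    then show ?thesis
      by (simp add: Z_eq_partial_sum_plus_tail[of _ K, abs_def])
  qed
  then show ?thesis
    using meromorphic_on_meromorphic_at by blast
qed

lemma den_eq_0_iff:
  "den k s = 0 \<longleftrightarrow> (\<exists>n::int. s = - 2 * of_nat k + of_int (2 * n + int k) * pi * \<i> / of_real L)"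
proof -
  have "den k s = 0 \<longleftrightarrow> exp ((s + 2 * of_nat k) * of_real L) = exp (of_nat k * (of_real pi * \<i>))"
    by (simp add: den_eq exp_of_nat_mult)
  also have "\<dots> \<longleftrightarrow> (\<exists>n::int. (s + 2 * of_nat k) * of_real L = of_nat k * (of_real pi * \<i>) + of_int (2 * n) * pi * \<i>)"
    by (rule exp_eq)
  also have "\<dots> \<longleftrightarrow> (\<exists>n::int. s = - 2 * of_nat k + of_int (2 * n + int k) * pi * \<i> / of_real L)"
    using L_pos by (intro ex_cong1) (auto simp: field_simps)
  finally show ?thesis .
qed

lemma mem_poles_iff: "s \<in> poles \<longleftrightarrow> (\<exists>k. den k s = 0)"
  unfolding poles_def den_eq_0_iff by auto

lemma Re_eq_if_den_eq_0:
  assumes "den k s = 0"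
  shows "Re s = - 2 * real k"
proof -
  have "exp ((s + 2 * of_nat k) * of_real L) = (-1) ^ k"
    using assms by (simp add: den_eq)
  then have "norm (exp ((s + 2 * of_nat k) * of_real L)) = 1"
    by (simp add: norm_power)
  then have "exp ((Re s + 2 * real k) * L) = 1"
    by simp
  then show ?thesis
    using L_pos by simp
qed

lemma not_is_pole_Z: "z \<notin> poles \<Longrightarrow> \<not> is_pole Z z"
proof -
  assume "z \<notin> poles"
  define K where "K = nat \<lceil>norm z\<rceil> + 1"
  have "(\<lambda>s. complex_of_real q powr (s / 2) * ((\<Sum>k<K. binom_term k s) + tail K s)) analytic_on {z}"
    using \<open>z \<notin> poles\<close> tail_analytic_at_ceiling_norm[of z, folded K_def]
    by (intro analytic_intros binom_term_analytic powr_q_analytic) (auto simp: mem_poles_iff)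
  then show "\<not> is_pole Z z"
    by (simp add: Z_eq_partial_sum_plus_tail[of _ K, abs_def] analytic_at_imp_no_pole)
qed

lemma deriv_den_nonzero: "deriv (den k) z \<noteq> 0"
proof -
  have "(den k has_field_derivative exp ((z + 2 * of_nat k) * of_real L) * of_real L) (at z)"
    unfolding den_eq[abs_def] by (auto intro!: derivative_eq_intros)
  then show ?thesis
    using L_pos by (simp add: DERIV_imp_deriv)
qed

lemma gbinomial_nonzero_if_den_eq_0:
  assumes "den k z = 0"
  shows "(- z) gchoose k \<noteq> 0"
proof -
  have "pochhammer z k \<noteq> 0"
    using Re_eq_if_den_eq_0[OF assms] by (auto simp: pochhammer_eq_0_iff)
  then show ?thesis
    by (simp add: gbinomial_pochhammer)
qed

lemma simple_pole_Z:
  assumes "den k0 z = 0"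
  shows "is_pole Z z \<and> zorder Z z = -1"
proof -
  define K where "K = nat \<lceil>norm z\<rceil> + 1"
  have "k0 < K"
    using Re_gt_neg_two_ceiling_norm[of z] Re_eq_if_den_eq_0[OF assms] by (simp add: K_def)
  have den_nonzero_at_z: "den k z \<noteq> 0" if "k \<noteq> k0" for k
    using Re_eq_if_den_eq_0[of k z] Re_eq_if_den_eq_0[OF assms] that by auto
  define f where "f s = complex_of_real q powr (s / 2) * ((- s) gchoose k0)" for s
  define h where "h s = complex_of_real q powr (s / 2) *
                   ((\<Sum>k\<in>{..<K} - {k0}. binom_term k s) + tail K s)" for s
  have "Z s = f s / den k0 s + h s" for s
  proof -
    have "(\<Sum>k<K. binom_term k s) = binom_term k0 s + (\<Sum>k\<in>{..<K} - {k0}. binom_term k s)"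
      using \<open>k0 < K\<close> by (simp add: sum.remove)
    then show ?thesis
      by (simp add: Z_eq_partial_sum_plus_tail[of _ K] f_def h_def binom_term_def distrib_left)
  qed
  then have "Z = (\<lambda>s. f s / den k0 s + h s)" ..
  moreover have "is_pole (\<lambda>s. f s / den k0 s + h s) z \<and> zorder (\<lambda>s. f s / den k0 s + h s) z = -1"
  proof (rule simple_pole_quotient_plus_analytic)
    show "f analytic_on {z}"
      unfolding f_def gbinomial_prod_rev powr_of_real_pos[OF q_pos] by (intro analytic_intros) auto
    show "den k0 analytic_on {z}"
      using holomorphic_on_imp_analytic_at[OF den_holomorphic open_UNIV] by blast
    show "h analytic_on {z}"
      unfolding h_def using tail_analytic_at_ceiling_norm[of z, folded K_def] den_nonzero_at_z
      by (intro analytic_intros binom_term_analytic powr_q_analytic) auto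
    show "f z \<noteq> 0"
      using gbinomial_nonzero_if_den_eq_0[OF assms] by (simp add: f_def powr_of_real_pos[OF q_pos])
  qed (use assms deriv_den_nonzero in auto)
  ultimately show ?thesis
    by simp
qed

lemma poles_Z: "{s. is_pole Z s} = poles"
  using not_is_pole_Z simple_pole_Z mem_poles_iff by blast

lemma zorder_Z: "s \<in> poles \<Longrightarrow> zorder Z s = -1"
  using simple_pole_Z mem_poles_iff by blast

definition fib :: "nat \<Rightarrow> real" where
  "fib m = (e ^ m - (-1 / e) ^ m) / sqrt q"

definition delta :: "nat \<Rightarrow> real" where
  "delta m = - ((-1) ^ m * exp (-2 * real m * L))"

lemma abs_delta: "\<bar>delta m\<bar> = exp (-2 * real m * L)"
  by (simp add: delta_def abs_mult)

lemma abs_delta_le: "1 \<le> m \<Longrightarrow> \<bar>delta m\<bar> \<le> exp (-2 * L)"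
  unfolding abs_delta using L_pos by simp

lemma abs_delta_less_1: "1 \<le> m \<Longrightarrow> \<bar>delta m\<bar> < 1"
  unfolding abs_delta using L_pos by simp

lemma fib_eq: "fib m = exp (real m * L) * (1 + delta m) / sqrt q"
proof -
  have e_pow: "e ^ m = exp (real m * L)"
    using e_gt_1 exp_of_nat_mult[of m L] by (simp add: L_def)
  have "(-1 / e) ^ m = (-1) ^ m * exp (- (real m * L))"
    unfolding power_divide e_pow by (simp add: exp_minus divide_inverse)
  moreover have "exp (real m * L) * exp (-2 * real m * L) = exp (- (real m * L))"
    by (simp flip: exp_add)
  ultimately have "exp (real m * L) * (1 + delta m) = e ^ m - (-1 / e) ^ m"
    by (simp add: delta_def e_pow algebra_simps)
  then show ?thesis
    by (simp add: fib_def)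
qed

lemma powr_fib:
  assumes "1 \<le> m"
  shows "complex_of_real (fib m) powr (- s) = complex_of_real q powr (s / 2) *
           (exp (- s * of_nat m * of_real L) * complex_of_real (1 + delta m) powr (- s))"
proof -
  have pos: "0 < 1 + delta m"
    using abs_delta_less_1[OF assms] by linarith
  then have "0 < fib m"
    using q_pos by (simp add: fib_eq)
  have ln_fib: "ln (fib m) = real m * L + ln (1 + delta m) - ln q / 2"
    using pos q_pos by (simp add: fib_eq ln_mult ln_div ln_sqrt)
  have "complex_of_real (fib m) powr (- s) = exp (- s * of_real (ln (fib m)))"
    using \<open>0 < fib m\<close> by (rule powr_of_real_pos)
  also have "\<dots> = exp (s / 2 * of_real (ln q) + (- s * of_nat m * of_real L) +
                      (- s * of_real (ln (1 + delta m))))"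
    unfolding ln_fib by (intro arg_cong[where f = exp]) (simp add: algebra_simps)
  also have "\<dots> = complex_of_real q powr (s / 2) *
      (exp (- s * of_nat m * of_real L) * complex_of_real (1 + delta m) powr (- s))"
    unfolding powr_of_real_pos[OF pos] powr_of_real_pos[OF q_pos] by (simp only: exp_add mult.assoc)
  finally show ?thesis .
qed

definition expansion_term :: "complex \<Rightarrow> nat \<Rightarrow> nat \<Rightarrow> complex" where
  "expansion_term s m k =
     ((- s) gchoose k) * (exp (- s * of_nat m * of_real L) * complex_of_real (delta m) ^ k)"

lemma expansion_term_row_sums:
  assumes "1 \<le> m"
  shows "(\<lambda>k. expansion_term s m k) sums
           (exp (- s * of_nat m * of_real L) * complex_of_real (1 + delta m) powr (- s))"
proof -
  have "norm (complex_of_real (delta m)) < 1"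
    using abs_delta_less_1[OF assms] by simp
  from sums_mult[OF gen_binomial_complex[OF this, of "- s"], of "exp (- s * of_nat m * of_real L)"]
  show ?thesis
    by (simp add: expansion_term_def mult_ac)
qed

lemma expansion_term_eq_geometric:
  "exp (- s * of_nat m * of_real L) * complex_of_real (delta m) ^ k =
   (-1) ^ k * ((-1) ^ k * exp (- (s + 2 * of_nat k) * of_real L)) ^ m"
proof -
  have delta: "complex_of_real (delta m) = - ((-1) ^ m * exp (-2 * of_nat m * of_real L))"
    by (simp add: delta_def of_real_exp)
  have "complex_of_real (delta m) ^ k = (-1) ^ k * ((-1) ^ m) ^ k * exp (-2 * of_nat m * of_real L) ^ k"
    unfolding delta power_minus[of "(-1) ^ m * exp (-2 * of_nat m * of_real L)"] power_mult_distrib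
    by (simp only: mult.assoc)
  also have "((-1::complex) ^ m) ^ k = ((-1) ^ k) ^ m"
    by (simp add: power_mult[symmetric] mult.commute)
  also have "exp (-2 * of_nat m * complex_of_real L) ^ k = exp (of_nat k * (-2 * of_nat m * of_real L))"
    by (simp only: exp_of_nat_mult)
  finally have A: "complex_of_real (delta m) ^ k =
      (-1) ^ k * ((-1) ^ k) ^ m * exp (of_nat k * (-2 * of_nat m * of_real L))" .
  have B: "exp (- (s + 2 * of_nat k) * of_real L) ^ m = exp (of_nat m * (- (s + 2 * of_nat k) * of_real L))"
    by (simp add: exp_of_nat_mult)
  have C: "exp (- s * of_nat m * of_real L) * exp (of_nat k * (-2 * of_nat m * of_real L)) =
      exp (of_nat m * (- (s + 2 * of_nat k) * of_real L))"
    by (simp flip: exp_add) (simp add: algebra_simps)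
  show ?thesis
    unfolding A power_mult_distrib B using C by (simp add: mult_ac)
qed

lemma expansion_term_column_sums:
  assumes "0 < Re s"
  shows "(\<lambda>n. expansion_term s (Suc n) k) sums binom_term k s"
proof -
  define X where "X = exp ((s + 2 * of_nat k) * of_real L)"
  define w where "w = (-1) ^ k * exp (- (s + 2 * of_nat k) * of_real L)"
  have "norm w < 1"
    using mult_neg_pos[of "- Re s - 2 * real k" L] assms L_pos by (simp add: w_def norm_mult norm_power)
  then have geometric: "(\<lambda>n. w ^ Suc n) sums (w / (1 - w))"
    using sums_mult[OF geometric_sums, of w w] by (simp add: field_simps)
  have "expansion_term s (Suc n) k = ((- s) gchoose k) * (-1) ^ k * w ^ Suc n" for n
    unfolding expansion_term_def expansion_term_eq_geometric w_def by (simp only: mult.assoc)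
  then have "(\<lambda>n. expansion_term s (Suc n) k) sums (((- s) gchoose k) * (-1) ^ k * (w / (1 - w)))"
    by (simp only: sums_mult[OF geometric])
  moreover have "(-1) ^ k * (w / (1 - w)) = 1 / den k s"
  proof -
    have den: "den k s = X - (-1) ^ k"
      by (simp add: X_def den_eq)
    have w: "w = (-1) ^ k / X"
      unfolding w_def X_def by (simp only: mult_minus_left exp_minus divide_inverse)
    have "X \<noteq> 0" "((-1) ^ k * (-1) ^ k :: complex) = 1"
      by (simp_all add: X_def flip: power_add)
    moreover have "X - (-1) ^ k \<noteq> 0"
      using den_nonzero[of s k] assms by (simp add: den)
    ultimately show ?thesis
      unfolding den w by (simp add: field_simps)
  qed
  then have "((- s) gchoose k) * (-1) ^ k * (w / (1 - w)) = binom_term k s"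
    by (simp only: mult.assoc binom_term_def) simp
  ultimately show ?thesis
    by simp
qed

lemma norm_expansion_term_le:
  "norm (expansion_term s (Suc n) k) \<le> exp (- Re s * L) ^ Suc n * majorant (norm s) k"
proof -
  have "exp (- Re s * L) ^ Suc n = exp (of_nat (Suc n) * (- Re s * L))"
    by (simp only: exp_of_nat_mult)
  also have "of_nat (Suc n) * (- Re s * L) = - Re s * of_nat (Suc n) * L"
    by (simp only: mult_ac)
  finally have "norm (expansion_term s (Suc n) k) =
      norm ((- s) gchoose k) * (exp (- Re s * L) ^ Suc n * \<bar>delta (Suc n)\<bar> ^ k)"
    by (simp add: expansion_term_def norm_mult norm_power)
  also have "\<dots> \<le> pochhammer (norm s) k / fact k * (exp (- Re s * L) ^ Suc n * exp (-2 * L) ^ k)"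
    by (intro mult_mono mult_left_mono norm_gbinomial_uminus_le power_mono abs_delta_le)
      (auto simp: pochhammer_nonneg')
  finally show ?thesis
    by (simp add: majorant_def mult_ac)
qed

lemma fib_dirichlet_series:
  assumes "0 < Re s"
  shows "(\<lambda>n. complex_of_real (fib (Suc n)) powr (- s)) sums Z s"
proof -
  have "(\<lambda>n. exp (- s * of_nat (Suc n) * of_real L) * complex_of_real (1 + delta (Suc n)) powr (- s))
          sums (\<Sum>k. binom_term k s)"
  proof (rule sums_swap_dominated)
    show "(\<lambda>k. expansion_term s (Suc n) k) sums
            (exp (- s * of_nat (Suc n) * of_real L) * complex_of_real (1 + delta (Suc n)) powr (- s))" for n
      by (rule expansion_term_row_sums) simp
    show "(\<lambda>n. expansion_term s (Suc n) k) sums binom_term k s" for k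
      using assms by (rule expansion_term_column_sums)
    show "norm (expansion_term s (Suc n) k) \<le> exp (- Re s * L) ^ Suc n * majorant (norm s) k" for n k
      by (rule norm_expansion_term_le)
    show "summable (\<lambda>n. exp (- Re s * L) ^ Suc n)"
      using assms L_pos mult_neg_pos[of "- Re s" L] by (simp add: summable_geometric)
    show "summable (majorant (norm s))"
      by (rule summable_majorant) simp
    show "0 \<le> exp (- Re s * L) ^ Suc n" for n
      by simp
    show "0 \<le> majorant (norm s) k" for k
      by (rule majorant_nonneg) simp
  qed
  then have "(\<lambda>n. complex_of_real q powr (s / 2) * (exp (- s * of_nat (Suc n) * of_real L) *
               complex_of_real (1 + delta (Suc n)) powr (- s))) sums Z s"
    unfolding Z_def by (rule sums_mult)
  moreover have "complex_of_real (fib (Suc n)) powr (- s) = complex_of_real q powr (s / 2) *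
      (exp (- s * of_nat (Suc n) * of_real L) * complex_of_real (1 + delta (Suc n)) powr (- s))" for n
    by (rule powr_fib) simp
  ultimately show ?thesis
    by simp
qed

end

theorem mainTheorem4:
  fixes D :: int and \<epsilon> :: real
  assumes "D > 0" and "squarefree D"
    and "is_fundamental_unit D \<epsilon>"
    and "qnorm D \<epsilon> = -1"
  defines "P \<equiv> {s :: complex. \<exists>k::nat. \<exists>n::int.
             s = - 2 * of_nat k + of_int (2 * n + int k) * pi * \<i> / of_real (ln \<epsilon>)}"
  shows "\<exists>Z :: complex \<Rightarrow> complex.
           Z meromorphic_on UNIV \<and>
           (\<forall>s. Re s > 0 \<longrightarrow>
              (\<lambda>n. complex_of_real (F_D D \<epsilon> (Suc n)) powr (- s)) sums Z s) \<and>
           (\<forall>s. s \<notin> P \<longrightarrow>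
              (\<lambda>k. complex_of_int (qdisc D) powr (s / 2) * (((- s) gchoose k) /
                        (complex_of_real \<epsilon> powr (s + 2 * of_nat k) + (-1) ^ (k + 1))))
                sums Z s) \<and>
           {s. is_pole Z s} = P \<and>
           (\<forall>s\<in>P. zorder Z s = -1)"
proof -
  have "1 < \<epsilon>"
    using assms(3) by (simp add: is_fundamental_unit_def)
  moreover have "0 < real_of_int (qdisc D)"
    using assms(1) by (simp add: qdisc_def)
  ultimately interpret fibonacci_zeta "real_of_int (qdisc D)" \<epsilon>
    by unfold_locales
  have "qconj D \<epsilon> = -1 / \<epsilon>"
    using assms(4) \<open>1 < \<epsilon>\<close> by (simp add: qnorm_def field_simps)
  then have F_D: "F_D D \<epsilon> n = fib n" for n
    by (simp add: F_D_def fib_def)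
  have P: "P = poles"
    by (simp add: P_def poles_def L_def)
  show ?thesis
  proof (intro exI[of _ Z] conjI allI impI ballI)
    show "(\<lambda>n. complex_of_real (F_D D \<epsilon> (Suc n)) powr (- s)) sums Z s" if "Re s > 0" for s
      unfolding F_D using that by (rule fib_dirichlet_series)
    show "(\<lambda>k. complex_of_int (qdisc D) powr (s / 2) * (((- s) gchoose k) /
            (complex_of_real \<epsilon> powr (s + 2 * of_nat k) + (-1) ^ (k + 1)))) sums Z s" for s
      using sums_Z[of s] by (simp add: binom_term_def den_def)
  qed (simp_all add: P Z_meromorphic poles_Z zorder_Z)
qed

end
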